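(* Every real hypersurface $M^3$ in $\mathbb{C}P^2$ or $\mathbb{C}H^2$ satisfies $\langle S^*X,Y\rangle=\frac{\rho^*}{2}\langle X,Y\rangle$ for all $X,Y\in W^\perp$, with $$\frac{\rho^*}{2}=4c+\lambda\nu-\mu^2,$$ where, at each point, $X_0\in W^\perp$ is a unit vector with $\langle AW,\varphi X_0\rangle=0$ (e.g. $X_0$ the unit vector with $AW=\alpha W+\beta X_0$, $\beta>0$, where $AW\ne\alpha W$), $Y_0=\varphi X_0$, $\lambda=\langle AX_0,X_0\rangle$, $\mu=\langle AX_0,Y_0\rangle$, $\nu=\langle AY_0,Y_0\rangle$.
   Context: $\mathbb{C}P^2$, $\mathbb{C}H^2$ carry Kähler metrics of constant holomorphic sectional curvature $4c\ne0$, complex structure $J$, connection $\widetilde\nabla$. For a real hypersurface $M$ with unit normal $\xi$: $W$ with $JW=\xi$; $W^\perp$ the holomorphic distribution; $\varphi X=JX-\langle X,W\rangle\xi$; $AX=-\widetilde\nabla_X\xi$; $\alpha=\langle AW,W\rangle$; $R$ the curvature tensor of $M$ ($R(X,Y)=\nabla_X\nabla_Y-\nabla_Y\nabla_X-\nabla_{[X,Y]}$). The *-Ricci tensor $S^*$ is defined by $\langle S^*X,Y\rangle=\tfrac12\operatorname{trace}\{Z\mapsto\varphi R(X,\varphi Y)Z\}$ and $\rho^*=\operatorname{trace}S^*$. *)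

theory Defs
  imports "HOL-Analysis.Analysis"
begin

text \<open>Pointwise (tangent-space) model of a real hypersurface M^3 in CP^2 / CH^2.
  The ambient tangent space at a point is a 4-dimensional Euclidean space with
  an orthogonal complex structure J; \<xi> is the unit normal, T = \<xi>-orthogonal
  complement is the tangent space of M, A the shape operator.\<close>

definition tproj :: "'a::real_inner \<Rightarrow> 'a \<Rightarrow> 'a" where
  "tproj \<xi> x = x - inner x \<xi> *\<^sub>R \<xi>"

text \<open>W with J W = \<xi>, i.e. W = - J \<xi>.\<close>
definition Wvec :: "('a::real_inner \<Rightarrow> 'a) \<Rightarrow> 'a \<Rightarrow> 'a" where
  "Wvec J \<xi> = - J \<xi>"

definition phi :: "('a::real_inner \<Rightarrow> 'a) \<Rightarrow> 'a \<Rightarrow> 'a \<Rightarrow> 'a" where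
  "phi J \<xi> X = J X - inner X (Wvec J \<xi>) *\<^sub>R \<xi>"

text \<open>Curvature tensor of the complex space form of constant holomorphic
  sectional curvature 4c, convention R(X,Y) = [\<nabla>X,\<nabla>Y] - \<nabla>[X,Y].\<close>
definition ambR :: "real \<Rightarrow> ('a::real_inner \<Rightarrow> 'a) \<Rightarrow> 'a \<Rightarrow> 'a \<Rightarrow> 'a \<Rightarrow> 'a" where
  "ambR c J X Y Z = c *\<^sub>R (inner Y Z *\<^sub>R X - inner X Z *\<^sub>R Y
      + inner (J Y) Z *\<^sub>R J X - inner (J X) Z *\<^sub>R J Y - (2 * inner (J X) Y) *\<^sub>R J Z)"

text \<open>Curvature tensor of M via the Gauss equation.\<close>
definition hypR :: "real \<Rightarrow> ('a::real_inner \<Rightarrow> 'a) \<Rightarrow> 'a \<Rightarrow> ('a \<Rightarrow> 'a) \<Rightarrow> 'a \<Rightarrow> 'a \<Rightarrow> 'a \<Rightarrow> 'a" where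
  "hypR c J \<xi> A X Y Z = tproj \<xi> (ambR c J X Y Z)
      + inner (A Y) Z *\<^sub>R A X - inner (A X) Z *\<^sub>R A Y"

text \<open>Trace of an endomorphism of the tangent space T (trace of its compression).\<close>
definition trT :: "'a::euclidean_space \<Rightarrow> ('a \<Rightarrow> 'a) \<Rightarrow> real" where
  "trT \<xi> f = (\<Sum>b\<in>Basis. inner (tproj \<xi> (f (tproj \<xi> b))) b)"

definition SstarForm :: "real \<Rightarrow> ('a::euclidean_space \<Rightarrow> 'a) \<Rightarrow> 'a \<Rightarrow> ('a \<Rightarrow> 'a) \<Rightarrow> 'a \<Rightarrow> 'a \<Rightarrow> real" where
  "SstarForm c J \<xi> A X Y = trT \<xi> (\<lambda>Z. phi J \<xi> (hypR c J \<xi> A X (phi J \<xi> Y) Z)) / 2"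

definition rhostar :: "real \<Rightarrow> ('a::euclidean_space \<Rightarrow> 'a) \<Rightarrow> 'a \<Rightarrow> ('a \<Rightarrow> 'a) \<Rightarrow> real" where
  "rhostar c J \<xi> A = (\<Sum>b\<in>Basis. SstarForm c J \<xi> A (tproj \<xi> b) (tproj \<xi> b))"

end

theory Submission
  imports Defs
begin

text \<open>Complete the unit vector \<open>X\<^sub>0 \<in> W\<^sup>\<perp>\<close> to the orthonormal frame \<open>W, X\<^sub>0, Y\<^sub>0 = JX\<^sub>0, \<xi>\<close> of the
  ambient tangent space. The traces defining \<open>S\<^sup>*\<close> and \<open>\<rho>\<^sup>*\<close> are basis independent, so they can be
  computed in this frame, where the Gauss equation gives \<open>S\<^sup>*(W,W) = 0\<close>,
  \<open>S\<^sup>*(X\<^sub>0,X\<^sub>0) = S\<^sup>*(Y\<^sub>0,Y\<^sub>0) = 4c + \<lambda>\<nu> - \<mu>\<^sup>2\<close> and \<open>S\<^sup>*(X\<^sub>0,Y\<^sub>0) = S\<^sup>*(Y\<^sub>0,X\<^sub>0) = 0\<close>; bilinearity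
  does the rest.\<close>

lemma orthonormal_basis_representation:
  fixes U :: "'a::euclidean_space set"
  assumes orth: "pairwise orthogonal U" and unit: "\<And>u. u \<in> U \<Longrightarrow> norm u = 1"
    and card: "card U = DIM('a)"
  shows "(\<Sum>u\<in>U. (x \<bullet> u) *\<^sub>R u) = x"
proof -
  have fin: "finite U"
    using card by (intro card_ge_0_finite) simp
  have "independent U"
    using unit by (intro pairwise_orthogonal_independent[OF orth]) force
  then have "x \<in> span U"
    using card_eq_dim[of U UNIV] card fin by auto
  then show ?thesis
    using orthonormal_basis_expand[OF orth unit _ fin] by blast
qed

lemma trace_bilinear_orthonormal_basis:
  fixes U :: "'a::euclidean_space set"
  assumes orth: "pairwise orthogonal U" and unit: "\<And>u. u \<in> U \<Longrightarrow> norm u = 1"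
    and card: "card U = DIM('a)" and bil: "bilinear \<beta>"
  shows "(\<Sum>b\<in>Basis. \<beta> b b) = (\<Sum>u\<in>U. \<beta> u u)"
proof -
  have left: "linear (\<lambda>x. \<beta> x y)" and right: "linear (\<lambda>y. \<beta> x y)" for x y
    using bil by (simp_all add: bilinear_def)
  have "(\<Sum>b\<in>Basis. \<beta> b b) = (\<Sum>b\<in>Basis. \<Sum>u\<in>U. (b \<bullet> u) *\<^sub>R \<beta> u b)"
  proof (rule sum.cong[OF refl])
    fix b :: 'a
    have "\<beta> b b = \<beta> (\<Sum>u\<in>U. (b \<bullet> u) *\<^sub>R u) b"
      by (simp add: orthonormal_basis_representation[OF orth unit card])
    then show "\<beta> b b = (\<Sum>u\<in>U. (b \<bullet> u) *\<^sub>R \<beta> u b)"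
      by (simp add: linear_sum[OF left] linear_scale[OF left])
  qed
  also have "\<dots> = (\<Sum>u\<in>U. \<beta> u (\<Sum>b\<in>Basis. (u \<bullet> b) *\<^sub>R b))"
    by (subst sum.swap) (simp add: linear_sum[OF right] linear_scale[OF right] inner_commute)
  also have "\<dots> = (\<Sum>u\<in>U. \<beta> u u)"
    by (simp add: euclidean_representation)
  finally show ?thesis .
qed

lemma bilinear_compose_linear:
  "bilinear h \<Longrightarrow> linear f \<Longrightarrow> linear g \<Longrightarrow> bilinear (\<lambda>x y. h (f x) (g y))"
  unfolding bilinear_def linear_iff by (simp add: linear_add linear_scale)

lemma linear_tproj: "linear (tproj \<xi>)"
  unfolding linear_iff tproj_def by (simp add: algebra_simps)

lemma tproj_orthogonal: "u \<bullet> \<xi> = 0 \<Longrightarrow> tproj \<xi> u = u"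
  by (simp add: tproj_def)

lemma inner_tproj_left: "u \<bullet> \<xi> = 0 \<Longrightarrow> tproj \<xi> v \<bullet> u = v \<bullet> u"
  using inner_commute[of u \<xi>] by (simp add: tproj_def inner_diff_left)

lemma tproj_normal: "norm \<xi> = 1 \<Longrightarrow> tproj \<xi> \<xi> = 0"
  by (simp add: tproj_def dot_square_norm)

lemma trT_orthonormal_basis:
  fixes U :: "'a::euclidean_space set"
  assumes orth: "pairwise orthogonal U" and unit: "\<And>u. u \<in> U \<Longrightarrow> norm u = 1"
    and card: "card U = DIM('a)" and xi: "\<xi> \<in> U" and f: "linear f"
  shows "trT \<xi> f = (\<Sum>u\<in>U - {\<xi>}. f u \<bullet> u)"
proof -
  have fin: "finite U"
    using card by (intro card_ge_0_finite) simp
  have tangent: "u \<bullet> \<xi> = 0" if "u \<in> U - {\<xi>}" for u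
    using orth xi that by (auto simp: pairwise_def orthogonal_def)
  have "linear (\<lambda>a. tproj \<xi> (f (tproj \<xi> a)))"
    using linear_compose[OF linear_compose[OF linear_tproj f] linear_tproj] by (simp add: o_def)
  then have bil: "bilinear (\<lambda>a b. tproj \<xi> (f (tproj \<xi> a)) \<bullet> b)"
    using bilinear_compose_linear[OF bilinear_conv_bounded_bilinear[THEN iffD2, OF bounded_bilinear_inner]
        _ linear_id] by (simp add: id_def)
  have "trT \<xi> f = (\<Sum>u\<in>U. tproj \<xi> (f (tproj \<xi> u)) \<bullet> u)"
    unfolding trT_def by (rule trace_bilinear_orthonormal_basis[OF orth unit card bil])
  also have "\<dots> = (\<Sum>u\<in>U - {\<xi>}. f u \<bullet> u)"
    using tangent unit[OF xi]
    by (simp add: sum.remove[OF fin xi] tproj_normal linear_0[OF f] linear_0[OF linear_tproj]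
        tproj_orthogonal inner_tproj_left)
  finally show ?thesis .
qed

lemma linear_phi: "linear J \<Longrightarrow> linear (phi J \<xi>)"
  unfolding linear_iff phi_def by (simp add: algebra_simps linear_add linear_scale)

lemma linear_hypR_left: "linear J \<Longrightarrow> linear A \<Longrightarrow> linear (\<lambda>X. hypR c J \<xi> A X Y Z)"
  unfolding linear_iff hypR_def ambR_def tproj_def by (simp add: algebra_simps linear_add linear_scale)

lemma linear_hypR_middle: "linear J \<Longrightarrow> linear A \<Longrightarrow> linear (\<lambda>Y. hypR c J \<xi> A X Y Z)"
  unfolding linear_iff hypR_def ambR_def tproj_def by (simp add: algebra_simps linear_add linear_scale)

lemma linear_hypR_right: "linear J \<Longrightarrow> linear (\<lambda>Z. hypR c J \<xi> A X Y Z)"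
  unfolding linear_iff hypR_def ambR_def tproj_def by (simp add: algebra_simps linear_add linear_scale)

lemma bilinear_SstarForm:
  assumes J: "linear J" and A: "linear A"
  shows "bilinear (SstarForm c J \<xi> A)"
proof -
  have "linear (\<lambda>X. phi J \<xi> (hypR c J \<xi> A X (phi J \<xi> Y) Z))" for Y Z
    using linear_compose[OF linear_hypR_left[OF J A] linear_phi[OF J]] by (simp add: o_def)
  moreover have "linear (\<lambda>Y. phi J \<xi> (hypR c J \<xi> A X (phi J \<xi> Y) Z))" for X Z
    using linear_compose[OF linear_compose[OF linear_phi[OF J] linear_hypR_middle[OF J A]] linear_phi[OF J]]
    by (simp add: o_def)
  ultimately show ?thesis
    unfolding bilinear_def linear_iff SstarForm_def trT_def
    by (simp add: linear_add linear_scale linear_add[OF linear_tproj] linear_scale[OF linear_tproj]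
        inner_add_left sum.distrib add_divide_distrib sum_distrib_left)
qed

lemma SstarForm_orthonormal_basis:
  fixes U :: "'a::euclidean_space set"
  assumes orth: "pairwise orthogonal U" and unit: "\<And>u. u \<in> U \<Longrightarrow> norm u = 1"
    and card: "card U = DIM('a)" and xi: "\<xi> \<in> U" and J: "linear J"
  shows "SstarForm c J \<xi> A X Y = (\<Sum>u\<in>U - {\<xi>}. phi J \<xi> (hypR c J \<xi> A X (phi J \<xi> Y) u) \<bullet> u) / 2"
proof -
  have "linear (\<lambda>Z. phi J \<xi> (hypR c J \<xi> A X (phi J \<xi> Y) Z))"
    using linear_compose[OF linear_hypR_right[OF J] linear_phi[OF J]] by (simp add: o_def)
  then show ?thesis
    unfolding SstarForm_def by (simp add: trT_orthonormal_basis[OF orth unit card xi])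
qed

lemma rhostar_orthonormal_basis:
  fixes U :: "'a::euclidean_space set"
  assumes orth: "pairwise orthogonal U" and unit: "\<And>u. u \<in> U \<Longrightarrow> norm u = 1"
    and card: "card U = DIM('a)" and xi: "\<xi> \<in> U" and J: "linear J" and A: "linear A"
  shows "rhostar c J \<xi> A = (\<Sum>u\<in>U - {\<xi>}. SstarForm c J \<xi> A u u)"
proof -
  have fin: "finite U"
    using card by (intro card_ge_0_finite) simp
  have tangent: "u \<bullet> \<xi> = 0" if "u \<in> U - {\<xi>}" for u
    using orth xi that by (auto simp: pairwise_def orthogonal_def)
  note S = bilinear_SstarForm[OF J A, of c \<xi>]
  have bil: "bilinear (\<lambda>x y. SstarForm c J \<xi> A (tproj \<xi> x) (tproj \<xi> y))"
    by (rule bilinear_compose_linear[OF S linear_tproj linear_tproj])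
  have "rhostar c J \<xi> A = (\<Sum>u\<in>U. SstarForm c J \<xi> A (tproj \<xi> u) (tproj \<xi> u))"
    unfolding rhostar_def by (rule trace_bilinear_orthonormal_basis[OF orth unit card bil])
  also have "\<dots> = (\<Sum>u\<in>U - {\<xi>}. SstarForm c J \<xi> A u u)"
    using tangent unit[OF xi]
    by (simp add: sum.remove[OF fin xi] tproj_normal bilinear_lzero[OF S] tproj_orthogonal)
  finally show ?thesis .
qed

locale hypersurface_tangent_space =
  fixes c :: real and J :: "'a::euclidean_space \<Rightarrow> 'a" and \<xi> :: 'a and A :: "'a \<Rightarrow> 'a"
  assumes dim: "DIM('a) = 4"
    and J_lin: "linear J"
    and J_sq: "\<And>x. J (J x) = - x"
    and J_orth: "\<And>x y. J x \<bullet> J y = x \<bullet> y"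
    and xi_unit: "norm \<xi> = 1"
    and A_lin: "linear A"
    and A_tan: "\<And>X. X \<bullet> \<xi> = 0 \<Longrightarrow> A X \<bullet> \<xi> = 0"
    and A_sym: "\<And>X Y. X \<bullet> \<xi> = 0 \<Longrightarrow> Y \<bullet> \<xi> = 0 \<Longrightarrow> A X \<bullet> Y = X \<bullet> A Y"
begin

abbreviation W :: 'a where "W \<equiv> Wvec J \<xi>"

lemma J_skew: "J x \<bullet> y = - (x \<bullet> J y)"
  using J_orth[of x "J y"] by (simp add: J_sq)

lemma inner_J_self: "J x \<bullet> x = 0"
  using J_skew[of x x] by (simp add: inner_commute)

lemma J_W: "J W = \<xi>" and J_xi: "J \<xi> = - W"
  by (simp_all add: Wvec_def J_sq linear_neg[OF J_lin])

lemma adapted_frame_inner: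
  assumes X0: "X0 \<bullet> \<xi> = 0" "X0 \<bullet> W = 0" "norm X0 = 1"
  shows "W \<bullet> W = 1" "X0 \<bullet> X0 = 1" "J X0 \<bullet> J X0 = 1" "\<xi> \<bullet> \<xi> = 1"
    and "W \<bullet> X0 = 0" "W \<bullet> J X0 = 0" "W \<bullet> \<xi> = 0" "X0 \<bullet> J X0 = 0" "X0 \<bullet> \<xi> = 0" "J X0 \<bullet> \<xi> = 0"
    and "X0 \<bullet> W = 0" "J X0 \<bullet> W = 0" "\<xi> \<bullet> W = 0" "J X0 \<bullet> X0 = 0" "\<xi> \<bullet> X0 = 0" "\<xi> \<bullet> J X0 = 0"
  using X0 xi_unit J_skew[of X0 \<xi>, unfolded J_xi] J_skew[of X0 W, unfolded J_W]
    J_orth[of \<xi> \<xi>] J_orth[of X0 X0] inner_J_self[of X0] inner_J_self[of \<xi>]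
  by (simp_all add: dot_square_norm inner_commute, simp_all add: Wvec_def)

lemma adapted_frame_orthonormal_basis:
  assumes X0: "X0 \<bullet> \<xi> = 0" "X0 \<bullet> W = 0" "norm X0 = 1"
  defines "U \<equiv> {W, X0, J X0, \<xi>}"
  shows "pairwise orthogonal U" "\<And>u. u \<in> U \<Longrightarrow> norm u = 1" "card U = DIM('a)"
    and "U - {\<xi>} = {W, X0, J X0}" "W \<noteq> X0" "W \<noteq> J X0" "X0 \<noteq> J X0"
proof -
  note ip = adapted_frame_inner[OF X0]
  show distinct: "W \<noteq> X0" "W \<noteq> J X0" "X0 \<noteq> J X0"
    using ip by (metis zero_neq_one)+
  have "W \<noteq> \<xi>" "X0 \<noteq> \<xi>" "J X0 \<noteq> \<xi>"
    using ip by (metis zero_neq_one)+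
  then show "card U = DIM('a)" "U - {\<xi>} = {W, X0, J X0}"
    unfolding U_def using distinct dim by auto
  show "pairwise orthogonal U"
    unfolding U_def pairwise_def orthogonal_def using ip by auto
  show "norm u = 1" if "u \<in> U" for u
    using that ip unfolding U_def by (auto simp: norm_eq_sqrt_inner)
qed

lemma tangent_adapted_frame_expansion:
  assumes X0: "X0 \<bullet> \<xi> = 0" "X0 \<bullet> W = 0" "norm X0 = 1" and v: "v \<bullet> \<xi> = 0"
  shows "v = (v \<bullet> W) *\<^sub>R W + (v \<bullet> X0) *\<^sub>R X0 + (v \<bullet> J X0) *\<^sub>R J X0"
proof -
  note U = adapted_frame_orthonormal_basis[OF X0]
  have "v = (\<Sum>u\<in>{W, X0, J X0, \<xi>}. (v \<bullet> u) *\<^sub>R u)"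
    using orthonormal_basis_representation[OF U(1-3)] by simp
  also have "\<dots> = (v \<bullet> W) *\<^sub>R W + (v \<bullet> X0) *\<^sub>R X0 + (v \<bullet> J X0) *\<^sub>R J X0"
    using U(4-7) v by (auto simp: sum.insert_remove insert_Diff_if)
  finally show ?thesis .
qed

lemma SstarForm_adapted_frame:
  assumes X0: "X0 \<bullet> \<xi> = 0" "X0 \<bullet> W = 0" "norm X0 = 1"
  defines "Y0 \<equiv> J X0"
  defines "K \<equiv> 4 * c + (A X0 \<bullet> X0) * (A Y0 \<bullet> Y0) - (A X0 \<bullet> Y0)\<^sup>2"
  shows "SstarForm c J \<xi> A W W = 0" "SstarForm c J \<xi> A X0 X0 = K" "SstarForm c J \<xi> A Y0 Y0 = K"
    and "SstarForm c J \<xi> A X0 Y0 = 0" "SstarForm c J \<xi> A Y0 X0 = 0"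
proof -
  note U = adapted_frame_orthonormal_basis[OF X0]
  note ip = adapted_frame_inner[OF X0, folded Y0_def]
  define al p q la mu nu where "al = A W \<bullet> W" and "p = A W \<bullet> X0" and "q = A W \<bullet> Y0"
    and "la = A X0 \<bullet> X0" and "mu = A X0 \<bullet> Y0" and "nu = A Y0 \<bullet> Y0"
  have expand: "v = (v \<bullet> W) *\<^sub>R W + (v \<bullet> X0) *\<^sub>R X0 + (v \<bullet> Y0) *\<^sub>R Y0" if "v \<bullet> \<xi> = 0" for v
    using tangent_adapted_frame_expansion[OF X0 that] by (simp add: Y0_def)
  have A_frame: "A W = al *\<^sub>R W + p *\<^sub>R X0 + q *\<^sub>R Y0"
      "A X0 = p *\<^sub>R W + la *\<^sub>R X0 + mu *\<^sub>R Y0"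
      "A Y0 = q *\<^sub>R W + mu *\<^sub>R X0 + nu *\<^sub>R Y0"
    using expand[of "A W"] expand[of "A X0"] expand[of "A Y0"] ip A_tan[of W] A_tan[of X0] A_tan[of Y0]
      A_sym[of X0 W] A_sym[of Y0 W] A_sym[of Y0 X0]
    unfolding al_def p_def q_def la_def mu_def nu_def by (simp_all add: inner_commute)
  have J_frame: "J X0 = Y0" "J Y0 = - X0"
    by (simp_all add: Y0_def J_sq)
  have S: "SstarForm c J \<xi> A X Y = (\<Sum>u\<in>{W, X0, Y0}. phi J \<xi> (hypR c J \<xi> A X (phi J \<xi> Y) u) \<bullet> u) / 2"
    for X Y
    using SstarForm_orthonormal_basis[OF U(1-3) _ J_lin] U(4) by (simp add: Y0_def)
  have K: "K = 4 * c + la * nu - mu\<^sup>2"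
    by (simp add: K_def la_def mu_def nu_def)
  note simps = S K U(5-7)[folded Y0_def] ip J_frame J_W J_xi A_frame power2_eq_square
    linear_add[OF J_lin] linear_scale[OF J_lin] linear_neg[OF J_lin] linear_diff[OF J_lin]
    linear_add[OF A_lin] linear_scale[OF A_lin] linear_neg[OF A_lin] linear_diff[OF A_lin]
    phi_def hypR_def ambR_def tproj_def inner_add_left inner_add_right inner_diff_left
    inner_diff_right inner_minus_left inner_minus_right
  show "SstarForm c J \<xi> A W W = 0" "SstarForm c J \<xi> A X0 X0 = K" "SstarForm c J \<xi> A Y0 Y0 = K"
    and "SstarForm c J \<xi> A X0 Y0 = 0" "SstarForm c J \<xi> A Y0 X0 = 0"
    by (simp_all add: simps linear_0[OF J_lin] linear_0[OF A_lin] field_simps)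
qed

lemma phi_holomorphic: "X \<bullet> W = 0 \<Longrightarrow> phi J \<xi> X = J X"
  by (simp add: phi_def)

lemma rhostar_adapted_frame:
  assumes X0: "X0 \<bullet> \<xi> = 0" "X0 \<bullet> W = 0" "norm X0 = 1"
  shows "rhostar c J \<xi> A / 2 = 4 * c + (A X0 \<bullet> X0) * (A (phi J \<xi> X0) \<bullet> phi J \<xi> X0)
      - (A X0 \<bullet> phi J \<xi> X0)\<^sup>2"
proof -
  note U = adapted_frame_orthonormal_basis[OF X0]
  have "rhostar c J \<xi> A = (\<Sum>u\<in>{W, X0, J X0}. SstarForm c J \<xi> A u u)"
    using rhostar_orthonormal_basis[OF U(1-3) _ J_lin A_lin] U(4) by simp
  then show ?thesis
    using U(5-7) by (simp add: SstarForm_adapted_frame[OF X0] phi_holomorphic[OF X0(2)])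
qed

lemma SstarForm_holomorphic:
  assumes X0: "X0 \<bullet> \<xi> = 0" "X0 \<bullet> W = 0" "norm X0 = 1"
    and X: "X \<bullet> \<xi> = 0" "X \<bullet> W = 0" and Y: "Y \<bullet> \<xi> = 0" "Y \<bullet> W = 0"
  shows "SstarForm c J \<xi> A X Y = rhostar c J \<xi> A / 2 * (X \<bullet> Y)"
proof -
  note S = bilinear_SstarForm[OF J_lin A_lin, of c \<xi>]
  note ip = adapted_frame_inner[OF X0]
  have eX: "X = (X \<bullet> X0) *\<^sub>R X0 + (X \<bullet> J X0) *\<^sub>R J X0"
    using tangent_adapted_frame_expansion[OF X0 X(1)] X(2) by (simp add: inner_commute)
  have eY: "Y = (Y \<bullet> X0) *\<^sub>R X0 + (Y \<bullet> J X0) *\<^sub>R J X0"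
    using tangent_adapted_frame_expansion[OF X0 Y(1)] Y(2) by (simp add: inner_commute)
  have "X \<bullet> Y = (X \<bullet> X0) * (Y \<bullet> X0) + (X \<bullet> J X0) * (Y \<bullet> J X0)"
    by (subst eX, subst eY) (simp add: inner_add_left inner_add_right ip)
  moreover have "SstarForm c J \<xi> A X Y
      = rhostar c J \<xi> A / 2 * ((X \<bullet> X0) * (Y \<bullet> X0) + (X \<bullet> J X0) * (Y \<bullet> J X0))"
    by (subst eX, subst eY)
      (simp add: bilinear_ladd[OF S] bilinear_radd[OF S] bilinear_lmul[OF S] bilinear_rmul[OF S]
        SstarForm_adapted_frame[OF X0] rhostar_adapted_frame[OF X0] phi_holomorphic[OF X0(2)]
        algebra_simps)
  ultimately show ?thesis by simp
qed

lemma exists_holomorphic_unit_vector: "\<exists>X0. X0 \<bullet> \<xi> = 0 \<and> X0 \<bullet> W = 0 \<and> norm X0 = 1"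
proof -
  have "dim {\<xi>, W} \<le> card {\<xi>, W}"
    by (rule dim_le_card') simp
  also have "\<dots> < DIM('a)"
    using dim by (simp add: card_insert_if)
  finally obtain x where "x \<noteq> 0" "\<And>y. y \<in> span {\<xi>, W} \<Longrightarrow> orthogonal x y"
    using orthogonal_to_subspace_exists by blast
  then show ?thesis
    by (intro exI[of _ "x /\<^sub>R norm x"]) (auto simp: orthogonal_def span_base)
qed

end

theorem proposition14:
  fixes c :: real and J :: "'a::euclidean_space \<Rightarrow> 'a" and \<xi> :: 'a and A :: "'a \<Rightarrow> 'a"
  assumes dim: "DIM('a) = 4"
    and c: "c \<noteq> 0"
    and J_lin: "linear J"
    and J_sq: "\<And>x. J (J x) = - x"
    and J_orth: "\<And>x y. inner (J x) (J y) = inner x y"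
    and xi_unit: "norm \<xi> = 1"
    and A_lin: "linear A"
    and A_tan: "\<And>X. inner X \<xi> = 0 \<Longrightarrow> inner (A X) \<xi> = 0"
    and A_sym: "\<And>X Y. inner X \<xi> = 0 \<Longrightarrow> inner Y \<xi> = 0 \<Longrightarrow> inner (A X) Y = inner X (A Y)"
  shows "(\<forall>X Y. inner X \<xi> = 0 \<and> inner X (Wvec J \<xi>) = 0 \<and>
                inner Y \<xi> = 0 \<and> inner Y (Wvec J \<xi>) = 0 \<longrightarrow>
                SstarForm c J \<xi> A X Y = rhostar c J \<xi> A / 2 * inner X Y)
    \<and> (\<forall>X0. inner X0 \<xi> = 0 \<and> inner X0 (Wvec J \<xi>) = 0 \<and> norm X0 = 1 \<and>
            inner (A (Wvec J \<xi>)) (phi J \<xi> X0) = 0 \<longrightarrow>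
            rhostar c J \<xi> A / 2 =
              4 * c + inner (A X0) X0 * inner (A (phi J \<xi> X0)) (phi J \<xi> X0)
                    - (inner (A X0) (phi J \<xi> X0))\<^sup>2)"
proof -
  interpret hypersurface_tangent_space c J \<xi> A
    by (rule hypersurface_tangent_space.intro[OF dim J_lin J_sq J_orth xi_unit A_lin A_tan A_sym])
  obtain X0 where X0: "X0 \<bullet> \<xi> = 0" "X0 \<bullet> W = 0" "norm X0 = 1"
    using exists_holomorphic_unit_vector by blast
  show ?thesis
    using SstarForm_holomorphic[OF X0] rhostar_adapted_frame by blast
qed

end
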